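(* Let $\mathsf{A}\subset GL_2(\mathbb{R})$ be such that $\mathsf{A}$ has an invariant unstable multicone $\mathcal{C}$ and $\mathcal{S}(\mathsf{A})$ does not contain parabolic elements. Let $\mathsf{A}_e$ be the collection of all conformal elements of $\mathsf{A}$. Then $A_1F_1\cdots A_nF_n\mathcal{C}\subset\mathcal{C}^o$ for all $n\ge(\#\partial\mathcal{C})^2+1$, all $A_1,\ldots,A_n\in\mathsf{A}\setminus\mathsf{A}_e$, and all $F_1,\ldots,F_n\in\mathcal{F}(\mathsf{A})$.
   Context: $\mathcal{S}(\mathsf{B})$ denotes the semigroup of finite products of elements of $\mathsf{B}$, and $\mathcal{F}(\mathsf{A})=\mathcal{S}(\{|\det A|^{-1/2}A: A\in\mathsf{A}_e\})$. A matrix is conformal if its two eigenvalues have equal absolute value; parabolic if it has only one eigenspace; proximal if it has real eigenvalues of distinct absolute value, with $u(A)$, $s(A)$ the eigenspaces for the eigenvalue of larger/smaller absolute value. $\mathbb{RP}^1$ is the real projective line; a multicone is a proper subset of $\mathbb{RP}^1$ that is a finite union of closed projective intervals; $\mathcal{C}^o$ is its interior and $\partial\mathcal{C}$ its boundary; invariant means $A\mathcal{C}\subset\mathcal{C}$ for all $A\in\mathsf{A}$. $X_u(\mathsf{A})=\overline{\{u(A):A\in\mathcal{S}(\mathsf{A})\text{ proximal}\}}$, $X_s(\mathsf{A})=\overline{\{s(A):A\in\mathcal{S}(\mathsf{A})\text{ proximal}\}}$. A multicone $\mathcal{C}$ is an unstable multicone for $\mathsf{A}$ if $\mathcal{S}(\mathsf{A})$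 contains a proximal element, $\mathcal{C}\cap X_s(\mathsf{A})=\emptyset$, $\partial\mathcal{C}\cap X_u(\mathsf{A})=\emptyset$, and each connected component of $\mathcal{C}$ meets $X_u(\mathsf{A})$. *)

theory Defs
  imports "HOL-Analysis.Analysis"
begin

text \<open>Real 2x2 matrices are elements of type real^2^2.  The real projective
line RP^1 is modelled by angle coordinates: the angle theta (a real number) stands for
the line spanned by dir theta = (cos theta, sin theta); theta and theta + k pi represent
the same point.  Subsets of RP^1 are modelled by their (pi-periodic) preimages in the
reals; the quotient map is a local homeomorphism, so interior, boundary, closure and
(for proper subsets) connected components are computed in the reals.\<close>

definition dir :: "real \<Rightarrow> real^2" where
  "dir \<theta> = vector [cos \<theta>, sin \<theta>]"

definition mtr :: "real^2^2 \<Rightarrow> real" where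
  "mtr A = A$1$1 + A$2$2"

definition pact :: "real^2^2 \<Rightarrow> real set \<Rightarrow> real set" where
  "pact A C = {\<theta>. \<exists>\<phi>\<in>C. \<exists>(t::real). A *v dir \<phi> = scaleR t (dir \<theta>)}"

inductive_set semigrp :: "(real^2^2) set \<Rightarrow> (real^2^2) set" for B where
  base: "A \<in> B \<Longrightarrow> A \<in> semigrp B"
| mult: "A \<in> semigrp B \<Longrightarrow> M \<in> semigrp B \<Longrightarrow> A ** M \<in> semigrp B"

text \<open>Eigenvalues of a 2x2 matrix, with multiplicity, are the roots of
x^2 - tr x + det.\<close>
definition conformal :: "real^2^2 \<Rightarrow> bool" where
  "conformal A \<longleftrightarrow> (\<exists>l m :: complex. l + m = complex_of_real (mtr A)
      \<and> l * m = complex_of_real (det A) \<and> cmod l = cmod m)"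

definition parabolic :: "real^2^2 \<Rightarrow> bool" where
  "parabolic A \<longleftrightarrow> (\<exists>v. v \<noteq> 0 \<and> (\<exists>l. A *v v = l *\<^sub>R v) \<and>
      (\<forall>w. w \<noteq> 0 \<longrightarrow> (\<exists>m. A *v w = m *\<^sub>R w) \<longrightarrow> (\<exists>t. w = t *\<^sub>R v)))"

definition proximal :: "real^2^2 \<Rightarrow> bool" where
  "proximal A \<longleftrightarrow> (\<exists>l m :: real. l + m = mtr A \<and> l * m = det A \<and> \<bar>l\<bar> \<noteq> \<bar>m\<bar>)"

definition uspace :: "real^2^2 \<Rightarrow> real set" where
  "uspace A = {\<theta>. \<exists>l m. l + m = mtr A \<and> l * m = det A \<and> \<bar>l\<bar> > \<bar>m\<bar>
                 \<and> A *v dir \<theta> = l *\<^sub>R dir \<theta>}"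

definition sspace :: "real^2^2 \<Rightarrow> real set" where
  "sspace A = {\<theta>. \<exists>l m. l + m = mtr A \<and> l * m = det A \<and> \<bar>l\<bar> < \<bar>m\<bar>
                 \<and> A *v dir \<theta> = l *\<^sub>R dir \<theta>}"

definition Xu :: "(real^2^2) set \<Rightarrow> real set" where
  "Xu B = closure (\<Union>{uspace A | A. A \<in> semigrp B \<and> proximal A})"

definition Xs :: "(real^2^2) set \<Rightarrow> real set" where
  "Xs B = closure (\<Union>{sspace A | A. A \<in> semigrp B \<and> proximal A})"

definition proj_interval :: "real \<Rightarrow> real \<Rightarrow> real set" where
  "proj_interval a b = {\<theta>. \<exists>k::int. \<theta> + of_int k * pi \<in> {a..b}}"

definition multicone :: "real set \<Rightarrow> bool" where
  "multicone C \<longleftrightarrow> C \<noteq> UNIV \<and> (\<exists>I :: (real \<times> real) set. finite I \<and>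
      (\<forall>(a,b)\<in>I. a < b \<and> b - a < pi) \<and> C = (\<Union>(a,b)\<in>I. proj_interval a b))"

definition invariant :: "(real^2^2) set \<Rightarrow> real set \<Rightarrow> bool" where
  "invariant B C \<longleftrightarrow> (\<forall>A\<in>B. pact A C \<subseteq> C)"

definition unstable_multicone :: "(real^2^2) set \<Rightarrow> real set \<Rightarrow> bool" where
  "unstable_multicone B C \<longleftrightarrow> multicone C \<and> (\<exists>A\<in>semigrp B. proximal A)
     \<and> C \<inter> Xs B = {} \<and> frontier C \<inter> Xu B = {}
     \<and> (\<forall>K\<in>components C. K \<inter> Xu B \<noteq> {})"

text \<open>Number of boundary points of C as a subset of RP^1 (one angle per line).\<close>
definition nbdry :: "real set \<Rightarrow> nat" where
  "nbdry C = card (frontier C \<inter> {0..<pi})"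

definition conformal_part :: "(real^2^2) set \<Rightarrow> (real^2^2) set" where
  "conformal_part B = {A\<in>B. conformal A}"

definition Fset :: "(real^2^2) set \<Rightarrow> (real^2^2) set" where
  "Fset B = semigrp {inverse (sqrt \<bar>det A\<bar>) *\<^sub>R A | A. A \<in> conformal_part B}"

definition alt_prod :: "(real^2^2) list \<Rightarrow> (real^2^2) list \<Rightarrow> real^2^2" where
  "alt_prod As Fs = foldr (\<lambda>(A,F) M. A ** F ** M) (zip As Fs) (mat 1)"

end

theory Submission
  imports Defs
begin

text \<open>If a point of \<open>C\<close> were sent to the boundary by \<open>A\<^sub>1F\<^sub>1\<cdots>A\<^sub>nF\<^sub>n\<close>, then, since each
  block \<open>A\<^sub>iF\<^sub>i\<close> maps \<open>C\<close> into itself and (being invertible) the interior into the interior,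
  all the intermediate images would be boundary lines too. With \<open>n \<ge> #\<partial>C\<close> two of them
  coincide, so a product of blocks fixes a boundary line. Up to a positive factor this product
  lies in \<open>\<S>(A)\<close>. If it is proximal, the fixed line lies in \<open>X\<^sub>u\<close> or \<open>X\<^sub>s\<close>, which the
  unstable multicone avoids on its boundary. Otherwise, as there are no parabolic elements,
  it or its square is scalar; then a non-conformal, hence proximal, generator maps \<open>C\<close> onto
  itself, permutes the finitely many boundary lines, and so fixes one of them: the same
  contradiction.\<close>

section \<open>Lines in the plane\<close>

lemma vec2_eq_iff: "(v::real^2) = w \<longleftrightarrow> v$1 = w$1 \<and> v$2 = w$2"
  by (simp add: vec_eq_iff forall_2)

lemma mat2_eq_iff:
  "(A::real^2^2) = B \<longleftrightarrow> A$1$1 = B$1$1 \<and> A$1$2 = B$1$2 \<and> A$2$1 = B$2$1 \<and> A$2$2 = B$2$2"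
  by (simp add: vec_eq_iff forall_2)

lemma matrix_vector_mult_2:
  "(M *v (x::real^2))$1 = M$1$1 * x$1 + M$1$2 * x$2"
  "(M *v (x::real^2))$2 = M$2$1 * x$1 + M$2$2 * x$2"
  by (simp_all add: matrix_vector_mult_def sum_2)

lemma matrix_matrix_mult_2: "((A::real^2^2) ** B)$i$j = A$i$1 * B$1$j + A$i$2 * B$2$j"
  by (simp add: matrix_matrix_mult_def sum_2)

lemma ex_scaleR_scaleR_iff:
  fixes v w :: "'a::real_vector"
  assumes "c \<noteq> 0"
  shows "(\<exists>t. v = t *\<^sub>R (c *\<^sub>R w)) \<longleftrightarrow> (\<exists>t. v = t *\<^sub>R w)"
proof
  assume "\<exists>t. v = t *\<^sub>R (c *\<^sub>R w)"
  then obtain t where "v = (t * c) *\<^sub>R w" by auto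
  then show "\<exists>t. v = t *\<^sub>R w" ..
next
  assume "\<exists>t. v = t *\<^sub>R w"
  then obtain t where "v = (t / c) *\<^sub>R (c *\<^sub>R w)" using assms by auto
  then show "\<exists>t. v = t *\<^sub>R (c *\<^sub>R w)" ..
qed

lemma ex_scaleR_eq_scaleR_iff:
  fixes v w :: "'a::real_vector"
  assumes "c \<noteq> 0"
  shows "(\<exists>t. c *\<^sub>R v = t *\<^sub>R w) \<longleftrightarrow> (\<exists>t. v = t *\<^sub>R w)"
proof
  assume "\<exists>t. c *\<^sub>R v = t *\<^sub>R w"
  then obtain t where "c *\<^sub>R v = t *\<^sub>R w" ..
  then have "v = (t / c) *\<^sub>R w" using assms
    by (metis divide_inverse_commute scaleR_scaleR scaleR_one left_inverse)
  then show "\<exists>t. v = t *\<^sub>R w" ..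
next
  assume "\<exists>t. v = t *\<^sub>R w"
  then obtain t where "v = t *\<^sub>R w" ..
  then have "c *\<^sub>R v = (c * t) *\<^sub>R w" by simp
  then show "\<exists>t. c *\<^sub>R v = t *\<^sub>R w" ..
qed

lemma dir_nth [simp]: "dir t $1 = cos t" "dir t $2 = sin t"
  by (simp_all add: dir_def)

lemma dir_neq_zero: "dir t \<noteq> 0"
  using sin_cos_squared_add[of t] by (auto simp: vec2_eq_iff simp del: sin_cos_squared_add)

lemma dir_add_int_pi: "dir (a + of_int k * pi) = (if even k then 1 else -1) *\<^sub>R dir a"
  using cos_npi_int[of k] sin_npi_int[of k]
  by (simp add: vec2_eq_iff cos_add sin_add mult.commute)

lemma dir_eq_scaleR_dir_imp:
  assumes "dir a = s *\<^sub>R dir b" shows "\<exists>k::int. a = b + of_int k * pi"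
proof -
  have "cos a = s * cos b" "sin a = s * sin b" using assms by (auto simp: vec2_eq_iff)
  then have "sin (a - b) = 0" by (simp add: sin_diff)
  then obtain k :: int where "a - b = of_int k * pi" using sin_zero_iff_int2 by blast
  then show ?thesis by (intro exI[of _ k]) simp
qed

lemma polar_dir: assumes "(v::real^2) \<noteq> 0" shows "\<exists>s b. s \<noteq> 0 \<and> v = s *\<^sub>R dir b"
proof -
  define z where "z = Complex (v$1) (v$2)"
  have "z \<noteq> 0" using assms by (auto simp: z_def vec2_eq_iff complex_eq_iff)
  have "Re (rcis (cmod z) (Arg z)) = v$1" "Im (rcis (cmod z) (Arg z)) = v$2"
    by (simp_all add: rcis_cmod_Arg z_def)
  then have "v = cmod z *\<^sub>R dir (Arg z)" by (simp add: vec2_eq_iff)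
  then show ?thesis using \<open>z \<noteq> 0\<close> by (intro exI[of _ "cmod z"] exI[of _ "Arg z"]) simp
qed

definition maps_line :: "real^2^2 \<Rightarrow> real \<Rightarrow> real \<Rightarrow> bool" where
  "maps_line M a b \<longleftrightarrow> (\<exists>t. M *v dir a = t *\<^sub>R dir b)"

lemma pact_maps_line: "pact M C = {b. \<exists>a\<in>C. maps_line M a b}"
  by (auto simp: pact_def maps_line_def)

lemma maps_line_add_int_pi_right [simp]:
  "maps_line M a (b + of_int k * pi) \<longleftrightarrow> maps_line M a b"
  unfolding maps_line_def dir_add_int_pi by (rule ex_scaleR_scaleR_iff) simp

lemma maps_line_add_int_pi_left [simp]:
  "maps_line M (a + of_int k * pi) b \<longleftrightarrow> maps_line M a b"
  unfolding maps_line_def dir_add_int_pi matrix_vector_mult_scaleR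
  by (rule ex_scaleR_eq_scaleR_iff) simp

section \<open>Periodic sets of angles and multicones\<close>

definition angle_rep :: "real \<Rightarrow> real" where
  "angle_rep t = t - of_int \<lfloor>t / pi\<rfloor> * pi"

lemma angle_rep_range: "0 \<le> angle_rep t" "angle_rep t < pi"
proof -
  have "of_int \<lfloor>t / pi\<rfloor> * pi \<le> t / pi * pi"
    by (rule mult_right_mono) (linarith, simp)
  moreover have "t / pi * pi < (of_int \<lfloor>t / pi\<rfloor> + 1) * pi"
    by (rule mult_strict_right_mono) (linarith, simp)
  ultimately show "0 \<le> angle_rep t" "angle_rep t < pi" by (simp_all add: angle_rep_def algebra_simps)
qed

lemma angle_rep_eq: "\<exists>k::int. angle_rep t = t + of_int k * pi"
  by (auto simp: angle_rep_def intro: exI[of _ "- \<lfloor>t / pi\<rfloor>"])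

lemma angle_rep_add_int_pi:
  assumes "0 \<le> t" "t < pi" shows "angle_rep (t + of_int k * pi) = t"
proof -
  have "\<lfloor>(t + of_int k * pi) / pi\<rfloor> = \<lfloor>t / pi + of_int k\<rfloor>" by (simp add: field_simps)
  also have "\<dots> = k" using assms by (simp add: floor_eq_iff)
  finally show ?thesis by (simp add: angle_rep_def)
qed

lemma maps_line_angle_rep [simp]:
  "maps_line M (angle_rep a) b \<longleftrightarrow> maps_line M a b"
  "maps_line M a (angle_rep b) \<longleftrightarrow> maps_line M a b"
  by (metis angle_rep_eq maps_line_add_int_pi_left, metis angle_rep_eq maps_line_add_int_pi_right)

definition pi_periodic :: "real set \<Rightarrow> bool" where
  "pi_periodic C \<longleftrightarrow> (\<forall>x k. x \<in> C \<longrightarrow> x + of_int (k::int) * pi \<in> C)"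

lemma pi_periodic_iff: "pi_periodic C \<Longrightarrow> x + of_int k * pi \<in> C \<longleftrightarrow> x \<in> C"
  unfolding pi_periodic_def
  by (metis add_diff_cancel_right' diff_conv_add_uminus minus_mult_left of_int_minus)

lemma pi_periodic_angle_rep: "pi_periodic C \<Longrightarrow> angle_rep x \<in> C \<longleftrightarrow> x \<in> C"
  by (metis angle_rep_eq pi_periodic_iff)

lemma pi_periodic_interior: assumes "pi_periodic C" shows "pi_periodic (interior C)"
  unfolding pi_periodic_def
proof (intro allI impI)
  fix x and k :: int
  assume "x \<in> interior C"
  then obtain e where e: "e > 0" "ball x e \<subseteq> C" by (auto simp: mem_interior)
  have "ball (x + of_int k * pi) e \<subseteq> C"
  proof
    fix y assume "y \<in> ball (x + of_int k * pi) e"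
    then have "y + of_int (-k) * pi \<in> ball x e" by (simp add: dist_real_def)
    then show "y \<in> C" using e pi_periodic_iff[OF assms] by blast
  qed
  then show "x + of_int k * pi \<in> interior C" using e by (auto simp: mem_interior)
qed

lemma pi_periodic_frontier:
  assumes "pi_periodic C" "closed C" shows "pi_periodic (frontier C)"
  using assms pi_periodic_iff[OF pi_periodic_interior[OF assms(1)]]
  by (auto simp: pi_periodic_def frontier_def closure_closed)

lemma pi_periodic_proj_interval: "pi_periodic (proj_interval a b)"
  unfolding pi_periodic_def proj_interval_def mem_Collect_eq
proof (intro allI impI)
  fix x and k :: int
  assume "\<exists>j::int. x + of_int j * pi \<in> {a..b}"
  then obtain j :: int where "x + of_int j * pi \<in> {a..b}" by blast
  then have "x + of_int k * pi + of_int (j - k) * pi \<in> {a..b}" by (simp add: algebra_simps)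
  then show "\<exists>j::int. x + of_int k * pi + of_int j * pi \<in> {a..b}" by blast
qed

text \<open>A projective interval is the preimage of a compact set under the continuous
  map \<open>\<theta> \<mapsto> cis (2\<theta>)\<close>, which identifies angles exactly up to multiples of \<open>pi\<close>.\<close>
lemma closed_proj_interval: "closed (proj_interval a b)"
proof -
  define p where "p \<theta> = cis (2 * \<theta>)" for \<theta>
  have "p \<theta> = p \<phi> \<longleftrightarrow> (\<exists>k::int. 2 * \<phi> = 2 * \<theta> + 2 * pi * of_int k)" for \<phi> \<theta>
    using sin_cos_eq_iff[of "2 * \<phi>" "2 * \<theta>"] by (auto simp: p_def complex_eq_iff)
  also have "\<dots> \<phi> \<theta> \<longleftrightarrow> (\<exists>k::int. \<phi> = \<theta> + of_int k * pi)" for \<phi> \<theta>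
    by (intro ex_cong1) (auto simp: field_simps)
  finally have "p \<theta> = p \<phi> \<longleftrightarrow> (\<exists>k::int. \<phi> = \<theta> + of_int k * pi)" for \<phi> \<theta> .
  then have "\<theta> \<in> p -` (p ` {a..b}) \<longleftrightarrow> (\<exists>\<phi>\<in>{a..b}. \<exists>k::int. \<phi> = \<theta> + of_int k * pi)" for \<theta>
    by (auto simp: image_iff)
  then have "proj_interval a b = p -` (p ` {a..b})"
    unfolding set_eq_iff proj_interval_def by auto
  moreover have "continuous_on UNIV p" unfolding p_def by (intro continuous_intros)
  moreover have "compact (p ` {a..b})"
    by (intro compact_continuous_image continuous_on_subset[OF \<open>continuous_on UNIV p\<close>]) auto
  ultimately show ?thesis by (metis closed_vimage compact_imp_closed)
qed

lemma interior_proj_interval: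
  assumes "t + of_int k * pi \<in> {a<..<b}" shows "t \<in> interior (proj_interval a b)"
proof (rule interiorI)
  show "open {a - of_int k * pi<..<b - of_int k * pi}" by simp
  show "{a - of_int k * pi<..<b - of_int k * pi} \<subseteq> proj_interval a b"
    by (auto simp: proj_interval_def intro!: exI[of _ k])
qed (use assms in auto)

lemma multicone_props:
  assumes "multicone C"
  shows "pi_periodic C" "closed C" "finite (frontier C \<inter> {0..<pi})"
proof -
  obtain I where I: "finite I" "C = (\<Union>(a,b)\<in>I. proj_interval a b)"
    using assms by (auto simp: multicone_def)
  show "pi_periodic C" unfolding I(2) using pi_periodic_proj_interval
    unfolding pi_periodic_def by blast
  show closed: "closed C" unfolding I(2) using I(1) by (intro closed_UN) (auto intro: closed_proj_interval)
  have "frontier C \<inter> {0..<pi} \<subseteq> (\<Union>(a,b)\<in>I. {angle_rep a, angle_rep b})"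
  proof
    fix t assume t: "t \<in> frontier C \<inter> {0..<pi}"
    then have "t \<in> C" "t \<notin> interior C" using closed by (auto simp: frontier_def closure_closed)
    then obtain a b k where ab: "(a,b) \<in> I" "t + of_int k * pi \<in> {a..b}"
      using I(2) by (auto simp: proj_interval_def)
    have "interior (proj_interval a b) \<subseteq> interior C"
      using I(2) ab(1) by (intro interior_mono) auto
    then have "t + of_int k * pi \<notin> {a<..<b}"
      using interior_proj_interval \<open>t \<notin> interior C\<close> by blast
    then have "t + of_int k * pi = a \<or> t + of_int k * pi = b" using ab(2) by auto
    moreover have "angle_rep (t + of_int k * pi) = t" using t by (simp add: angle_rep_add_int_pi)
    ultimately have "t \<in> {angle_rep a, angle_rep b}" by auto
    then show "t \<in> (\<Union>(a,b)\<in>I. {angle_rep a, angle_rep b})" using ab(1) by auto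
  qed
  moreover have "finite (\<Union>(a,b)\<in>I. {angle_rep a, angle_rep b})" using I(1) by auto
  ultimately show "finite (frontier C \<inter> {0..<pi})" by (rule finite_subset)
qed

section \<open>The projective action\<close>

lemma invertible_mult_vec_neq_zero:
  assumes "invertible (M::real^'n^'n)" "x \<noteq> 0" shows "M *v x \<noteq> 0"
proof
  assume "M *v x = 0"
  obtain N where "N ** M = mat 1" using assms(1) by (auto simp: invertible_def)
  then have "x = N *v (M *v x)" by (simp add: matrix_vector_mul_assoc)
  then show False using \<open>M *v x = 0\<close> assms(2) by simp
qed

lemma maps_line_exists: assumes "invertible M" shows "\<exists>b. maps_line M a b"
proof -
  obtain s b where "M *v dir a = s *\<^sub>R dir b"
    using polar_dir[OF invertible_mult_vec_neq_zero[OF assms dir_neq_zero]] by blast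
  then show ?thesis by (auto simp: maps_line_def)
qed

lemma maps_line_unique:
  assumes "invertible M" "maps_line M a b" "maps_line M a b'"
  shows "\<exists>k::int. b' = b + of_int k * pi"
proof -
  obtain t t' where t: "M *v dir a = t *\<^sub>R dir b" "M *v dir a = t' *\<^sub>R dir b'"
    using assms(2,3) by (auto simp: maps_line_def)
  then have "t' \<noteq> 0" using invertible_mult_vec_neq_zero[OF assms(1) dir_neq_zero] by auto
  then have "dir b' = (1 / t') *\<^sub>R (t' *\<^sub>R dir b')" by simp
  also have "\<dots> = (t / t') *\<^sub>R dir b" using t by simp
  finally have "dir b' = (t / t') *\<^sub>R dir b" .
  then show ?thesis using dir_eq_scaleR_dir_imp by blast
qed

lemma maps_line_mult:
  assumes "maps_line N a b" "maps_line M b c" shows "maps_line (M ** N) a c"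
proof -
  obtain s t where "N *v dir a = s *\<^sub>R dir b" "M *v dir b = t *\<^sub>R dir c"
    using assms by (auto simp: maps_line_def)
  then have "(M ** N) *v dir a = (s * t) *\<^sub>R dir c"
    by (simp add: matrix_vector_mul_assoc[symmetric] matrix_vector_mult_scaleR)
  then show ?thesis by (auto simp: maps_line_def)
qed

lemma maps_line_mult_split:
  assumes "invertible N" "maps_line (M ** N) a c"
  shows "\<exists>b. maps_line N a b \<and> maps_line M b c"
proof -
  obtain s b where sb: "s \<noteq> 0" "N *v dir a = s *\<^sub>R dir b"
    using polar_dir[OF invertible_mult_vec_neq_zero[OF assms(1) dir_neq_zero]] by blast
  have "maps_line M b c"
    using assms(2) sb unfolding maps_line_def
    by (simp add: matrix_vector_mul_assoc[symmetric] matrix_vector_mult_scaleR ex_scaleR_eq_scaleR_iff)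
  then show ?thesis using sb(2) by (auto simp: maps_line_def)
qed

lemma maps_line_scaleR [simp]: "c \<noteq> 0 \<Longrightarrow> maps_line (c *\<^sub>R M) a b \<longleftrightarrow> maps_line M a b"
  unfolding maps_line_def scaleR_matrix_vector_assoc[symmetric] by (rule ex_scaleR_eq_scaleR_iff)

lemma maps_line_mat1_self: "maps_line (mat 1) a a"
  by (auto simp: maps_line_def intro: exI[of _ 1])

lemma maps_line_mat1: "maps_line (mat 1) a b \<longleftrightarrow> (\<exists>k::int. b = a + of_int k * pi)"
proof
  assume "maps_line (mat 1) a b"
  then show "\<exists>k::int. b = a + of_int k * pi"
    using maps_line_unique[of "mat 1" a a b] maps_line_mat1_self by (auto simp: invertible_def)
qed (use maps_line_mat1_self in auto)

lemma maps_line_inverse: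
  assumes "N ** M = mat 1" "maps_line M a b" shows "maps_line N b a"
proof -
  obtain s where s: "M *v dir a = s *\<^sub>R dir b" using assms(2) by (auto simp: maps_line_def)
  have "dir a = s *\<^sub>R (N *v dir b)"
    using arg_cong[OF s, of "(*v) N"] assms(1)
    by (simp add: matrix_vector_mul_assoc matrix_vector_mult_scaleR)
  moreover from this have "s \<noteq> 0" using dir_neq_zero by auto
  ultimately have "N *v dir b = (1 / s) *\<^sub>R dir a" by simp
  then show ?thesis by (auto simp: maps_line_def)
qed

lemma pact_mono: "C \<subseteq> D \<Longrightarrow> pact M C \<subseteq> pact M D"
  by (auto simp: pact_maps_line)

lemma pact_mult: assumes "invertible N" shows "pact (M ** N) C = pact M (pact N C)"
proof
  show "pact (M ** N) C \<subseteq> pact M (pact N C)"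
  proof
    fix c assume "c \<in> pact (M ** N) C"
    then obtain a where "a \<in> C" "maps_line (M ** N) a c" by (auto simp: pact_maps_line)
    moreover from this obtain b where "maps_line N a b" "maps_line M b c"
      using maps_line_mult_split[OF assms] by blast
    ultimately show "c \<in> pact M (pact N C)" by (auto simp: pact_maps_line)
  qed
qed (auto simp: pact_maps_line intro: maps_line_mult)

lemma pact_mult_subset:
  assumes "invertible N" "pact M C \<subseteq> C" "pact N C \<subseteq> C" shows "pact (M ** N) C \<subseteq> C"
  using pact_mult[OF assms(1)] pact_mono[OF assms(3), of M] assms(2) by simp

lemma pact_scalar_mat:
  assumes "pi_periodic C" "s \<noteq> 0" shows "pact (s *\<^sub>R mat 1) C = C"
proof -
  have "pact (s *\<^sub>R mat 1) C = {b. \<exists>a\<in>C. \<exists>k::int. b = a + of_int k * pi}"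
    using assms(2) by (simp add: pact_maps_line maps_line_mat1)
  also have "\<dots> = C"
  proof (intro equalityI subsetI)
    fix b assume "b \<in> C"
    then show "b \<in> {b. \<exists>a\<in>C. \<exists>k::int. b = a + of_int k * pi}" by (auto intro!: exI[of _ 0])
  qed (auto simp: pi_periodic_iff[OF assms(1)])
  finally show ?thesis .
qed

text \<open>Writing \<open>v\<close> in the frame rotated by \<open>a\<close>, with coordinates \<open>d\<close> along \<open>dir a\<close> and \<open>c\<close>
  orthogonal to it, exhibits an angle of the line through \<open>v\<close> that depends continuously on
  \<open>v\<close> wherever \<open>d \<noteq> 0\<close>.\<close>
lemma vector_eq_scaleR_dir_arctan:
  fixes v :: "real^2" and a :: real
  defines "d \<equiv> cos a * v$1 + sin a * v$2" and "c \<equiv> cos a * v$2 - sin a * v$1"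
  assumes "d \<noteq> 0"
  shows "v = (d * sqrt (1 + (c / d)\<^sup>2)) *\<^sub>R dir (a + arctan (c / d))"
proof -
  define q where "q = c / d"
  define r where "r = sqrt (1 + q\<^sup>2)"
  have "r > 0" by (simp add: r_def add_pos_nonneg)
  have trig: "cos (arctan q) = 1 / r" "sin (arctan q) = q / r"
    by (simp_all add: cos_arctan sin_arctan r_def)
  have "d * cos a - c * sin a = (cos a * cos a + sin a * sin a) * v$1"
    "d * sin a + c * cos a = (cos a * cos a + sin a * sin a) * v$2"
    by (simp_all add: d_def c_def algebra_simps del: sin_cos_squared_add3)
  then have v: "v$1 = d * cos a - c * sin a" "v$2 = d * sin a + c * cos a" by simp_all
  have c_eq: "c = q * d" using assms(3) by (simp add: q_def)
  have "r * cos (a + arctan q) = cos a - q * sin a" "r * sin (a + arctan q) = sin a + q * cos a"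
    using \<open>r > 0\<close> by (simp_all add: cos_add sin_add trig field_simps)
  then have "d * r * cos (a + arctan q) = d * (cos a - q * sin a)"
    "d * r * sin (a + arctan q) = d * (sin a + q * cos a)"
    by (simp_all only: mult.assoc)
  then have "d * r * cos (a + arctan q) = v$1" "d * r * sin (a + arctan q) = v$2"
    by (simp_all add: v c_eq algebra_simps)
  then show ?thesis by (simp add: vec2_eq_iff q_def r_def)
qed

lemma maps_line_continuous_selection:
  assumes "invertible N" "maps_line N b a"
  obtains g V where "open V" "b \<in> V" "continuous_on V g" "g b = a"
    "\<And>\<phi>. \<phi> \<in> V \<Longrightarrow> maps_line N \<phi> (g \<phi>)"
proof -
  define w where "w \<phi> = N *v dir \<phi>" for \<phi>
  define d where "d \<phi> = cos a * w \<phi> $1 + sin a * w \<phi> $2" for \<phi>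
  define c where "c \<phi> = cos a * w \<phi> $2 - sin a * w \<phi> $1" for \<phi>
  define g where "g \<phi> = a + arctan (c \<phi> / d \<phi>)" for \<phi>
  define V where "V = {\<phi>. d \<phi> \<noteq> 0}"
  have cont: "continuous_on UNIV d" "continuous_on UNIV c"
    unfolding d_def[abs_def] c_def[abs_def] w_def matrix_vector_mult_2 dir_nth
    by (intro continuous_intros)+
  then have "open V" unfolding V_def using open_Collect_neq continuous_on_const by blast
  have "continuous_on V d" "continuous_on V c" using cont continuous_on_subset by blast+
  then have "continuous_on V g" unfolding g_def[abs_def] by (intro continuous_intros) (auto simp: V_def)
  obtain s where s: "w b = s *\<^sub>R dir a" using assms(2) by (auto simp: maps_line_def w_def)
  then have "s \<noteq> 0" using invertible_mult_vec_neq_zero[OF assms(1) dir_neq_zero] by (auto simp: w_def)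
  have "d b = s * (cos a * cos a + sin a * sin a)" "c b = 0"
    using s by (simp_all add: d_def c_def algebra_simps del: sin_cos_squared_add3)
  then have "b \<in> V" "g b = a" using \<open>s \<noteq> 0\<close> by (simp_all add: V_def g_def)
  moreover have "maps_line N \<phi> (g \<phi>)" if "\<phi> \<in> V" for \<phi>
  proof -
    have "w \<phi> = (d \<phi> * sqrt (1 + (c \<phi> / d \<phi>)\<^sup>2)) *\<^sub>R dir (g \<phi>)"
      using that unfolding V_def mem_Collect_eq d_def c_def g_def by (rule vector_eq_scaleR_dir_arctan)
    then show ?thesis unfolding maps_line_def w_def by blast
  qed
  ultimately show ?thesis using that \<open>open V\<close> \<open>continuous_on V g\<close> by blast
qed

lemma open_pact:
  assumes "invertible M" "open U" shows "open (pact M U)"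
proof (subst open_subopen, intro ballI)
  fix b assume "b \<in> pact M U"
  then obtain a where a: "a \<in> U" "maps_line M a b" by (auto simp: pact_maps_line)
  obtain N where N: "M ** N = mat 1" "N ** M = mat 1" using assms(1) by (auto simp: invertible_def)
  then have "invertible N" by (auto simp: invertible_def)
  obtain g V where gV: "open V" "b \<in> V" "continuous_on V g" "g b = a"
    "\<And>\<phi>. \<phi> \<in> V \<Longrightarrow> maps_line N \<phi> (g \<phi>)"
    using maps_line_continuous_selection[OF \<open>invertible N\<close> maps_line_inverse[OF N(2) a(2)]] by blast
  have "open (g -` U \<inter> V)" using gV(1,3) assms(2) continuous_on_open_vimage by blast
  moreover have "b \<in> g -` U \<inter> V" using gV(2,4) a(1) by simp
  moreover have "g -` U \<inter> V \<subseteq> pact M U"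
    using gV(5) maps_line_inverse[OF N(1)] by (auto simp: pact_maps_line)
  ultimately show "\<exists>T. open T \<and> b \<in> T \<and> T \<subseteq> pact M U" by blast
qed

lemma pact_interior_subset:
  assumes "invertible M" "pact M C \<subseteq> C" shows "pact M (interior C) \<subseteq> interior C"
  using open_pact[OF assms(1) open_interior] pact_mono[OF interior_subset] assms(2)
  by (meson interior_maximal order_trans)

section \<open>Eigenlines of \<open>2 \<times> 2\<close> matrices\<close>

lemma cayley_hamilton_2: "(V::real^2^2) ** V = mtr V *\<^sub>R V - det V *\<^sub>R mat 1"
  by (simp add: mat2_eq_iff matrix_matrix_mult_2 mat_def det_2 mtr_def algebra_simps)

lemma det_scaleR_2: "det (c *\<^sub>R (V::real^2^2)) = c * c * det V"
  by (simp add: det_2 algebra_simps)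

lemma cayley_hamilton_2_vec: "(V::real^2^2) *v (V *v x) = mtr V *\<^sub>R (V *v x) - det V *\<^sub>R x"
  by (simp add: vec2_eq_iff matrix_vector_mult_2 det_2 mtr_def algebra_simps)

lemma eigenvalue_char_poly:
  assumes "V *v x = t *\<^sub>R x" "x \<noteq> 0" shows "t * t - mtr V * t + det V = 0"
proof -
  have "(t * t) *\<^sub>R x = mtr V *\<^sub>R (t *\<^sub>R x) - det V *\<^sub>R x"
    using cayley_hamilton_2_vec[of V x] assms(1) by (simp add: matrix_vector_mult_scaleR)
  then have "(t * t - mtr V * t + det V) *\<^sub>R x = 0" by (simp add: algebra_simps)
  then show ?thesis using assms(2) by simp
qed

lemma eigenvalue_pair:
  assumes "V *v dir u = t *\<^sub>R dir u"
  shows "t + (mtr V - t) = mtr V" "t * (mtr V - t) = det V"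
  using eigenvalue_char_poly[OF assms dir_neq_zero] by (simp_all add: algebra_simps)

text \<open>The characteristic roots of a non-conformal matrix are real: a complex-conjugate
  pair has equal moduli.\<close>
lemma nonconformal_imp_proximal: assumes "\<not> conformal A" shows "proximal A"
proof -
  define D where "D = mtr A * mtr A - 4 * det A"
  show ?thesis
  proof (cases "D \<ge> 0")
    case True
    define l where "l = (mtr A + sqrt D) / 2"
    define m where "m = (mtr A - sqrt D) / 2"
    have lm: "l + m = mtr A" "l * m = det A"
      using True by (simp_all add: l_def m_def D_def field_simps power2_eq_square[symmetric])
    moreover have "\<bar>l\<bar> \<noteq> \<bar>m\<bar>"
    proof
      assume "\<bar>l\<bar> = \<bar>m\<bar>"
      then have "cmod (complex_of_real l) = cmod (complex_of_real m)" by simp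
      moreover have "complex_of_real l + complex_of_real m = complex_of_real (mtr A)"
        "complex_of_real l * complex_of_real m = complex_of_real (det A)"
        using lm by (simp_all flip: of_real_add of_real_mult)
      ultimately show False using assms unfolding conformal_def by blast
    qed
    ultimately show ?thesis unfolding proximal_def by blast
  next
    case False
    define b where "b = sqrt (- D) / 2"
    have "b * b = - D / 4" unfolding b_def using False by (simp add: field_simps)
    then have "Complex (mtr A / 2) b * Complex (mtr A / 2) (- b) = complex_of_real (det A)"
      by (simp add: complex_eq_iff D_def field_simps)
    moreover have "Complex (mtr A / 2) b + Complex (mtr A / 2) (- b) = complex_of_real (mtr A)"
      by (simp add: complex_eq_iff)
    moreover have "cmod (Complex (mtr A / 2) b) = cmod (Complex (mtr A / 2) (- b))"
      by (simp add: cmod_def)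
    ultimately show ?thesis using assms unfolding conformal_def by blast
  qed
qed

lemma proximal_eigenline_cases:
  assumes "proximal V" "maps_line V u u"
  shows "u \<in> uspace V \<or> u \<in> sspace V"
proof -
  obtain l m where lm: "l + m = mtr V" "l * m = det V" "\<bar>l\<bar> \<noteq> \<bar>m\<bar>"
    using assms(1) by (auto simp: proximal_def)
  obtain t where t: "V *v dir u = t *\<^sub>R dir u" using assms(2) by (auto simp: maps_line_def)
  note tm = eigenvalue_pair[OF t]
  have "(t - l) * (t - m) = t * t - (l + m) * t + l * m" by (simp add: algebra_simps)
  then have "t = l \<or> t = m" using eigenvalue_char_poly[OF t dir_neq_zero] lm by simp
  then have "\<bar>t\<bar> \<noteq> \<bar>mtr V - t\<bar>" using lm by (auto simp flip: lm(1))
  then consider "\<bar>t\<bar> > \<bar>mtr V - t\<bar>" | "\<bar>t\<bar> < \<bar>mtr V - t\<bar>" by linarith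
  then show ?thesis
  proof cases
    case 1 then show ?thesis using t tm unfolding uspace_def by blast
  next
    case 2 then show ?thesis using t tm unfolding sspace_def by blast
  qed
qed

lemma eigenvectors_parallel:
  fixes V :: "real^2^2"
  assumes "V \<noteq> t *\<^sub>R mat 1" "V *v v = t *\<^sub>R v" "V *v w = t *\<^sub>R w" "v \<noteq> 0"
  shows "\<exists>k. w = k *\<^sub>R v"
proof -
  define x where "x = v$1 * w$2 - v$2 * w$1"
  have rows: "(V$i$1 - (if i = 1 then t else 0)) * x = 0 \<and> (V$i$2 - (if i = 2 then t else 0)) * x = 0"
    for i
  proof -
    have "(V$i$1 - (if i = 1 then t else 0)) * v$1 + (V$i$2 - (if i = 2 then t else 0)) * v$2 = 0"
      "(V$i$1 - (if i = 1 then t else 0)) * w$1 + (V$i$2 - (if i = 2 then t else 0)) * w$2 = 0"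
      using assms(2,3) exhaust_2[of i] by (auto simp: vec2_eq_iff matrix_vector_mult_2 algebra_simps)
    then show ?thesis unfolding x_def by algebra
  qed
  have "\<exists>i j. V$i$j \<noteq> (if i = j then t else 0)"
  proof (rule ccontr)
    assume "\<not> (\<exists>i j. V$i$j \<noteq> (if i = j then t else 0))"
    then have "V = t *\<^sub>R mat 1" by (simp add: vec_eq_iff mat_def)
    then show False using assms(1) by blast
  qed
  then obtain i j where "V$i$j \<noteq> (if i = j then t else 0)" by blast
  moreover have "(V$i$j - (if i = j then t else 0)) * x = 0"
    using rows[of i] exhaust_2[of j] by auto
  ultimately have "x = 0" by simp
  show ?thesis
  proof (cases "v$1 = 0")
    case False
    then have "w = (w$1 / v$1) *\<^sub>R v" using \<open>x = 0\<close> by (simp add: vec2_eq_iff x_def field_simps)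
    then show ?thesis by blast
  next
    case True
    then have "v$2 \<noteq> 0" using assms(4) by (auto simp: vec2_eq_iff)
    then have "w = (w$2 / v$2) *\<^sub>R v" using \<open>x = 0\<close> True by (simp add: vec2_eq_iff x_def field_simps)
    then show ?thesis by blast
  qed
qed

text \<open>A line fixed by a matrix that is neither proximal nor parabolic: the two eigenvalues
  have equal modulus, so they coincide (and the matrix is scalar) or are opposite (and its
  square is scalar).\<close>
lemma nonproximal_eigenline_cases:
  assumes "invertible V" "\<not> parabolic V" "\<not> proximal V" "maps_line V u u"
  shows "\<exists>s. s \<noteq> 0 \<and> (V = s *\<^sub>R mat 1 \<or> V ** V = s *\<^sub>R mat 1)"
proof -
  obtain t where t: "V *v dir u = t *\<^sub>R dir u" using assms(4) by (auto simp: maps_line_def)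
  note tm = eigenvalue_pair[OF t]
  have "t \<noteq> 0" using tm(2) assms(1) by (auto simp: invertible_det_nz)
  have "\<bar>t\<bar> = \<bar>mtr V - t\<bar>" using assms(3) tm unfolding proximal_def by blast
  then consider "mtr V - t = t" | "mtr V - t = - t" by linarith
  then show ?thesis
  proof cases
    case 1
    have "V = t *\<^sub>R mat 1"
    proof (rule ccontr)
      assume nonscalar: "V \<noteq> t *\<^sub>R mat 1"
      have "parabolic V" unfolding parabolic_def
      proof (intro exI[of _ "dir u"] conjI allI impI)
        fix w :: "real^2" assume w: "w \<noteq> 0" "\<exists>m. V *v w = m *\<^sub>R w"
        then obtain \<mu> where \<mu>: "V *v w = \<mu> *\<^sub>R w" by blast
        have "(\<mu> - t) * (\<mu> - t) = 0"
          using eigenvalue_char_poly[OF \<mu> w(1)] tm 1 by (simp add: algebra_simps)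
        then show "\<exists>k. w = k *\<^sub>R dir u"
          using eigenvectors_parallel[OF nonscalar t _ dir_neq_zero] \<mu> by simp
      qed (use t dir_neq_zero in auto)
      then show False using assms(2) by blast
    qed
    then show ?thesis using \<open>t \<noteq> 0\<close> by blast
  next
    case 2
    then have "mtr V = 0" "det V = - (t * t)" using tm(2) by simp_all
    then have "V ** V = (t * t) *\<^sub>R mat 1" by (simp add: cayley_hamilton_2)
    then show ?thesis using \<open>t \<noteq> 0\<close> by (intro exI[of _ "t * t"]) auto
  qed
qed

section \<open>Boundary lines fixed by proximal matrices\<close>

fun matpow :: "real^2^2 \<Rightarrow> nat \<Rightarrow> real^2^2" where
  "matpow A 0 = mat 1"
| "matpow A (Suc k) = A ** matpow A k"

fun lucas_U :: "real \<Rightarrow> real \<Rightarrow> nat \<Rightarrow> real" where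
  "lucas_U p q 0 = 0"
| "lucas_U p q (Suc 0) = 1"
| "lucas_U p q (Suc (Suc n)) = p * lucas_U p q (Suc n) - q * lucas_U p q n"

lemma lucas_U_roots:
  assumes "l + m = p" "l * m = q" shows "lucas_U p q n * (l - m) = l ^ n - m ^ n"
proof -
  have "lucas_U p q n * (l - m) = l ^ n - m ^ n \<and>
        lucas_U p q (Suc n) * (l - m) = l ^ Suc n - m ^ Suc n"
  proof (induction n)
    case (Suc n)
    have "lucas_U p q (Suc (Suc n)) * (l - m)
        = p * (lucas_U p q (Suc n) * (l - m)) - q * (lucas_U p q n * (l - m))"
      by (simp add: algebra_simps)
    also have "\<dots> = (l + m) * (l ^ Suc n - m ^ Suc n) - (l * m) * (l ^ n - m ^ n)"
      using Suc.IH assms by simp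
    also have "\<dots> = l ^ Suc (Suc n) - m ^ Suc (Suc n)" by (simp add: algebra_simps)
    finally show ?case using Suc.IH by blast
  qed simp
  then show ?thesis ..
qed

lemma matpow_Suc_mult_vec:
  "matpow A (Suc n) *v v
     = (- det A * lucas_U (mtr A) (det A) n) *\<^sub>R v + lucas_U (mtr A) (det A) (Suc n) *\<^sub>R (A *v v)"
proof (induction n)
  case (Suc n)
  have "matpow A (Suc (Suc n)) *v v = A *v (matpow A (Suc n) *v v)"
    by (simp add: matrix_vector_mul_assoc)
  also have "\<dots> = (- det A * lucas_U (mtr A) (det A) n) *\<^sub>R (A *v v)
      + lucas_U (mtr A) (det A) (Suc n) *\<^sub>R (A *v (A *v v))"
    unfolding Suc by (simp add: vec2_eq_iff matrix_vector_mult_2 algebra_simps)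
  also have "\<dots> = (- det A * lucas_U (mtr A) (det A) (Suc n)) *\<^sub>R v
      + lucas_U (mtr A) (det A) (Suc (Suc n)) *\<^sub>R (A *v v)"
    unfolding cayley_hamilton_2_vec by (simp add: algebra_simps)
  finally show ?case .
qed simp

text \<open>By the identity above, \<open>A\<^sup>n\<^sup>+\<^sup>1\<close> is a combination of \<open>1\<close> and \<open>A\<close> whose coefficient of \<open>A\<close>
  is \<open>(l\<^sup>n\<^sup>+\<^sup>1 - m\<^sup>n\<^sup>+\<^sup>1) / (l - m) \<noteq> 0\<close>; so a line fixed by \<open>A\<^sup>n\<^sup>+\<^sup>1\<close> is fixed by \<open>A\<close>.\<close>
lemma proximal_maps_line_matpow:
  assumes "proximal A" "0 < k" "maps_line (matpow A k) u u" shows "maps_line A u u"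
proof -
  obtain l m where lm: "l + m = mtr A" "l * m = det A" "\<bar>l\<bar> \<noteq> \<bar>m\<bar>"
    using assms(1) by (auto simp: proximal_def)
  obtain n where n: "k = Suc n" using assms(2) gr0_conv_Suc by blast
  obtain \<tau> where \<tau>: "matpow A k *v dir u = \<tau> *\<^sub>R dir u"
    using assms(3) by (auto simp: maps_line_def)
  define \<beta> where "\<beta> = lucas_U (mtr A) (det A) k"
  have "l ^ k \<noteq> m ^ k"
    using lm(3) assms(2) by (metis power_abs power_eq_iff_eq_base abs_ge_zero)
  then have "\<beta> \<noteq> 0" using lucas_U_roots[OF lm(1,2), of k] by (auto simp: \<beta>_def)
  define \<gamma> where "\<gamma> = \<tau> + det A * lucas_U (mtr A) (det A) n"
  have "\<beta> *\<^sub>R (A *v dir u) = \<gamma> *\<^sub>R dir u"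
    using \<tau> matpow_Suc_mult_vec[of A n "dir u"] by (simp add: n \<beta>_def \<gamma>_def algebra_simps)
  then have "A *v dir u = (\<gamma> / \<beta>) *\<^sub>R dir u"
    using \<open>\<beta> \<noteq> 0\<close> by (metis divide_inverse_commute scaleR_scaleR scaleR_one left_inverse)
  then show ?thesis by (auto simp: maps_line_def)
qed

lemma funpow_cycle:
  assumes "finite S" "f ` S \<subseteq> S" "x \<in> S" shows "\<exists>y\<in>S. \<exists>k>0. (f ^^ k) y = y"
proof -
  have orbit: "(f ^^ i) x \<in> S" for i
    by (induction i) (use assms(2,3) in auto)
  have "\<not> inj_on (\<lambda>i. (f ^^ i) x) {..card S}"
  proof
    assume "inj_on (\<lambda>i. (f ^^ i) x) {..card S}"
    then have "card {..card S} \<le> card S" using card_inj_on_le orbit assms(1) by blast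
    then show False by simp
  qed
  then obtain i j where ij: "i < j" "(f ^^ i) x = (f ^^ j) x"
    by (metis (no_types, lifting) inj_onI linorder_neqE_nat)
  have "(f ^^ (j - i)) ((f ^^ i) x) = (f ^^ (j - i + i)) x" by (simp only: funpow_add comp_apply)
  also have "\<dots> = (f ^^ i) x" using ij by simp
  finally have "(f ^^ (j - i)) ((f ^^ i) x) = (f ^^ i) x" .
  then show ?thesis using orbit ij(1) by (metis zero_less_diff)
qed

lemma pact_inverse_eq:
  assumes "invertible A" "N ** A = mat 1" "pact A C = C" "pi_periodic C" shows "pact N C = C"
  using pact_mult[OF assms(1), of N C] pact_scalar_mat[OF assms(4), of 1] assms(2,3) by simp

lemma maps_line_frontier:
  assumes "invertible A" "pact A C = C" "pi_periodic C" "closed C"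
    and "x \<in> frontier C" "maps_line A x y"
  shows "y \<in> frontier C"
proof -
  obtain N where N: "A ** N = mat 1" "N ** A = mat 1" using assms(1) by (auto simp: invertible_def)
  have "invertible N" using N by (auto simp: invertible_def)
  have "x \<in> C" using assms(4,5) by (simp add: frontier_def closure_closed)
  then have "y \<in> C" using assms(2,6) by (auto simp: pact_maps_line)
  moreover have "y \<notin> interior C"
  proof
    assume "y \<in> interior C"
    then have "x \<in> pact N (interior C)"
      using maps_line_inverse[OF N(2) assms(6)] by (auto simp: pact_maps_line)
    also have "\<dots> \<subseteq> interior C"
      using pact_interior_subset[OF \<open>invertible N\<close>] pact_inverse_eq[OF assms(1) N(2) assms(2,3)] by simp
    finally show False using assms(5) by (simp add: frontier_def)
  qed
  ultimately show ?thesis using assms(4) by (simp add: frontier_def closure_closed)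
qed

text \<open>An invertible proximal matrix mapping \<open>C\<close> onto itself permutes the finitely many
  boundary lines of \<open>C\<close>, so a power of it fixes one of them, and then so does the matrix.\<close>
lemma proximal_fixes_frontier_line:
  assumes "invertible A" "proximal A" "pact A C = C" "pi_periodic C" "closed C"
    and "finite (frontier C \<inter> {0..<pi})" "p \<in> frontier C"
  shows "\<exists>q\<in>frontier C. maps_line A q q"
proof -
  define S where "S = frontier C \<inter> {0..<pi}"
  define g where "g u = (SOME y. maps_line A u y)" for u
  have g: "maps_line A u (g u)" for u
    using someI_ex[OF maps_line_exists[OF assms(1)]] by (simp add: g_def)
  have rep_S: "angle_rep u \<in> S" if "u \<in> frontier C" for u
    using that pi_periodic_angle_rep[OF pi_periodic_frontier[OF assms(4,5)]] angle_rep_range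
    by (simp add: S_def)
  have "(angle_rep \<circ> g) ` S \<subseteq> S"
  proof
    fix v assume "v \<in> (angle_rep \<circ> g) ` S"
    then obtain u where "u \<in> frontier C" "v = angle_rep (g u)" by (auto simp: S_def)
    then show "v \<in> S" using rep_S maps_line_frontier[OF assms(1,3,4,5) _ g] by blast
  qed
  moreover have "finite S" using assms(6) by (simp add: S_def)
  ultimately obtain q k where q: "q \<in> S" "0 < k" "((angle_rep \<circ> g) ^^ k) q = q"
    using funpow_cycle[OF _ _ rep_S[OF assms(7)]] by blast
  have orbit: "maps_line (matpow A i) q (((angle_rep \<circ> g) ^^ i) q)" for i
  proof (induction i)
    case (Suc i)
    then show ?case using maps_line_mult[OF Suc g] by simp
  qed (simp add: maps_line_mat1_self)
  have "maps_line A q q"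
    using proximal_maps_line_matpow[OF assms(2) q(2)] orbit[of k] unfolding q(3) .
  then show ?thesis using q(1) by (auto simp: S_def)
qed

section \<open>Products of blocks\<close>

lemma sorted_wrt_irrefl_imp_distinct:
  "sorted_wrt R xs \<Longrightarrow> (\<And>x. x \<in> set xs \<Longrightarrow> \<not> R x x) \<Longrightarrow> distinct xs"
  by (induction xs) auto

lemma alt_prod_Cons: "alt_prod (A # As) (F # Fs) = A ** F ** alt_prod As Fs"
  by (simp add: alt_prod_def)

locale invariant_unstable_multicone =
  fixes AA :: "(real^2^2) set" and C :: "real set"
  assumes invertible_AA: "\<forall>A\<in>AA. invertible A"
    and invariant_C: "invariant AA C"
    and unstable_C: "unstable_multicone AA C"
    and no_parabolic: "\<forall>M\<in>semigrp AA. \<not> parabolic M"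
begin

lemma periodic_C: "pi_periodic C" and closed_C: "closed C"
  and finite_frontier_C: "finite (frontier C \<inter> {0..<pi})"
  using multicone_props unstable_C by (auto simp: unstable_multicone_def)

lemma frontier_C: "frontier C = C - interior C"
  by (simp add: frontier_def closure_closed closed_C)

lemma semigrp_AA_preserves: "M \<in> semigrp AA \<Longrightarrow> invertible M \<and> pact M C \<subseteq> C"
proof (induction rule: semigrp.induct)
  case (base A)
  then show ?case using invertible_AA invariant_C by (auto simp: invariant_def)
next
  case (mult A M)
  then show ?case by (simp add: invertible_mult pact_mult_subset)
qed

definition scaled_semigrp :: "(real^2^2) set" where
  "scaled_semigrp = {c *\<^sub>R V | c V. 0 < c \<and> V \<in> semigrp AA}"

lemma scaled_semigrp_preserves:
  assumes "W \<in> scaled_semigrp" shows "invertible W \<and> pact W C \<subseteq> C"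
proof -
  obtain c V where "0 < c" "V \<in> semigrp AA" "W = c *\<^sub>R V"
    using assms by (auto simp: scaled_semigrp_def)
  then show ?thesis
    using semigrp_AA_preserves by (auto simp: pact_maps_line invertible_det_nz det_scaleR_2)
qed

lemma scaled_semigrp_mult:
  assumes "W \<in> scaled_semigrp" "W' \<in> scaled_semigrp" shows "W ** W' \<in> scaled_semigrp"
proof -
  obtain c V c' V' where "0 < c" "V \<in> semigrp AA" "W = c *\<^sub>R V"
    "0 < c'" "V' \<in> semigrp AA" "W' = c' *\<^sub>R V'"
    using assms by (auto simp: scaled_semigrp_def)
  moreover from this have "W ** W' = (c * c') *\<^sub>R (V ** V')"
    by (simp add: matrix_scalar_ac scalar_matrix_assoc mult.commute)
  moreover have "0 < c * c'" "V ** V' \<in> semigrp AA"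
    using calculation by (simp_all add: semigrp.mult)
  ultimately show ?thesis unfolding scaled_semigrp_def by blast
qed

lemma AA_subset_scaled_semigrp: "AA \<subseteq> scaled_semigrp"
proof
  fix A assume "A \<in> AA"
  then show "A \<in> scaled_semigrp" unfolding scaled_semigrp_def
    by (intro CollectI exI[of _ 1] exI[of _ A]) (simp add: semigrp.base)
qed

lemma Fset_subset_scaled_semigrp: "Fset AA \<subseteq> scaled_semigrp"
proof
  fix F assume "F \<in> Fset AA"
  then show "F \<in> scaled_semigrp"
    unfolding Fset_def
  proof (induction rule: semigrp.induct)
    case (base F)
    then obtain A where "A \<in> AA" "F = inverse (sqrt \<bar>det A\<bar>) *\<^sub>R A"
      by (auto simp: conformal_part_def)
    moreover from this have "0 < inverse (sqrt \<bar>det A\<bar>)"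
      using invertible_AA by (simp add: invertible_det_nz)
    ultimately show ?case
      unfolding scaled_semigrp_def using semigrp.base by blast
  qed (rule scaled_semigrp_mult)
qed

definition blocks :: "(real^2^2) set" where
  "blocks = {A ** F | A F. A \<in> AA - conformal_part AA \<and> F \<in> Fset AA}"

lemma semigrp_blocks_factor:
  "W \<in> semigrp blocks \<Longrightarrow> \<exists>A\<in>AA - conformal_part AA. \<exists>R\<in>scaled_semigrp. W = A ** R"
proof (induction rule: semigrp.induct)
  case (base W)
  then show ?case using Fset_subset_scaled_semigrp by (auto simp: blocks_def)
next
  case (mult W W')
  then obtain A R where AR: "A \<in> AA - conformal_part AA" "R \<in> scaled_semigrp" "W = A ** R"
    by blast
  have "W' \<in> scaled_semigrp"
    using mult.IH(2) AA_subset_scaled_semigrp scaled_semigrp_mult by blast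
  then have "R ** W' \<in> scaled_semigrp" using AR(2) scaled_semigrp_mult by blast
  moreover have "W ** W' = A ** (R ** W')" using AR(3) by (simp add: matrix_mul_assoc)
  ultimately show ?case using AR(1) by blast
qed

lemma semigrp_blocks_subset: "W \<in> semigrp blocks \<Longrightarrow> W \<in> scaled_semigrp"
  using semigrp_blocks_factor AA_subset_scaled_semigrp scaled_semigrp_mult by blast

lemma proximal_no_frontier_eigenline:
  assumes "V \<in> semigrp AA" "proximal V" "u \<in> frontier C" shows "\<not> maps_line V u u"
proof
  assume "maps_line V u u"
  then have "u \<in> uspace V \<or> u \<in> sspace V" using proximal_eigenline_cases assms(2) by blast
  then have "u \<in> Xu AA \<or> u \<in> Xs AA"
    unfolding Xu_def Xs_def using assms(1,2) by (blast intro: subsetD[OF closure_subset])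
  moreover have "u \<in> C" using assms(3) frontier_C by blast
  ultimately show False using assms(3) unstable_C by (auto simp: unstable_multicone_def)
qed

lemma semigrp_blocks_scalar_imp_onto:
  assumes "Z \<in> semigrp blocks" "Z = s *\<^sub>R mat 1" "s \<noteq> 0"
  shows "\<exists>A\<in>AA - conformal_part AA. pact A C = C"
proof -
  obtain A R where AR: "A \<in> AA - conformal_part AA" "R \<in> scaled_semigrp" "Z = A ** R"
    using semigrp_blocks_factor[OF assms(1)] by blast
  have "C = pact Z C" using pact_scalar_mat[OF periodic_C assms(3)] assms(2) by simp
  also have "\<dots> = pact A (pact R C)" using AR scaled_semigrp_preserves pact_mult by blast
  also have "\<dots> \<subseteq> pact A C" using AR(2) scaled_semigrp_preserves pact_mono by blast
  finally have "C \<subseteq> pact A C" .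
  moreover have "pact A C \<subseteq> C" using AR(1) invariant_C by (auto simp: invariant_def)
  ultimately show ?thesis using AR(1) by blast
qed

lemma semigrp_blocks_not_scalar:
  assumes "Z \<in> semigrp blocks" "s \<noteq> 0" "p \<in> frontier C" shows "Z \<noteq> s *\<^sub>R mat 1"
proof
  assume "Z = s *\<^sub>R mat 1"
  then obtain A where A: "A \<in> AA - conformal_part AA" "pact A C = C"
    using semigrp_blocks_scalar_imp_onto assms(1,2) by blast
  then have "proximal A" using nonconformal_imp_proximal by (auto simp: conformal_part_def)
  then obtain q where "q \<in> frontier C" "maps_line A q q"
    using proximal_fixes_frontier_line[OF _ _ A(2) periodic_C closed_C finite_frontier_C assms(3)]
      invertible_AA A(1) by blast
  then show False using proximal_no_frontier_eigenline[OF semigrp.base \<open>proximal A\<close>] A(1) by blast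
qed

lemma semigrp_blocks_no_fixed_frontier_line:
  assumes "W \<in> semigrp blocks" "u \<in> frontier C" shows "\<not> maps_line W u u"
proof
  assume "maps_line W u u"
  obtain c V where cV: "0 < c" "V \<in> semigrp AA" "W = c *\<^sub>R V"
    using semigrp_blocks_subset[OF assms(1)] by (auto simp: scaled_semigrp_def)
  with \<open>maps_line W u u\<close> have "maps_line V u u" by simp
  show False
  proof (cases "proximal V")
    case True
    then show False using proximal_no_frontier_eigenline cV(2) assms(2) \<open>maps_line V u u\<close> by blast
  next
    case False
    obtain s where s: "s \<noteq> 0" "V = s *\<^sub>R mat 1 \<or> V ** V = s *\<^sub>R mat 1"
      using nonproximal_eigenline_cases[OF _ _ False \<open>maps_line V u u\<close>]
        semigrp_AA_preserves no_parabolic cV(2) by blast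
    have "W ** W = (c * c) *\<^sub>R (V ** V)"
      using cV(3) by (simp add: matrix_scalar_ac scalar_matrix_assoc)
    then have "W = (c * s) *\<^sub>R mat 1 \<or> W ** W = (c * c * s) *\<^sub>R mat 1"
      using s(2) cV(3) by auto
    moreover have "W ** W \<in> semigrp blocks" by (rule semigrp.mult[OF assms(1) assms(1)])
    ultimately show False
      using semigrp_blocks_not_scalar[OF _ _ assms(2)] assms(1) s(1) cV(1) by force
  qed
qed

lemma alt_prod_preserves:
  "length As = length Fs \<Longrightarrow> set As \<subseteq> AA \<Longrightarrow> set Fs \<subseteq> Fset AA
    \<Longrightarrow> invertible (alt_prod As Fs) \<and> pact (alt_prod As Fs) C \<subseteq> C"
proof (induction As arbitrary: Fs)
  case Nil
  then show ?case
    using pact_scalar_mat[OF periodic_C, of 1] by (simp add: alt_prod_def invertible_def)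
next
  case (Cons A As)
  then obtain F Fs' where Fs: "Fs = F # Fs'" by (cases Fs) auto
  have "A ** F \<in> scaled_semigrp"
    using Cons.prems Fs AA_subset_scaled_semigrp Fset_subset_scaled_semigrp scaled_semigrp_mult
    by auto
  then have "invertible (A ** F) \<and> pact (A ** F) C \<subseteq> C" by (rule scaled_semigrp_preserves)
  moreover have "invertible (alt_prod As Fs') \<and> pact (alt_prod As Fs') C \<subseteq> C"
    using Cons by (auto simp: Fs)
  ultimately show ?case by (simp add: Fs alt_prod_Cons invertible_mult pact_mult_subset)
qed

lemma angle_rep_frontier: "y \<in> frontier C \<Longrightarrow> angle_rep y \<in> frontier C \<inter> {0..<pi}"
  using pi_periodic_angle_rep[OF pi_periodic_frontier[OF periodic_C closed_C]] angle_rep_range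
  by simp

lemma frontier_preimage:
  assumes "B \<in> blocks" "invertible P" "pact P C \<subseteq> C"
    and "x \<in> C" "maps_line (B ** P) x y" "y \<in> frontier C"
  obtains z where "z \<in> frontier C" "maps_line P x z" "maps_line B z y"
proof -
  obtain z where z: "maps_line P x z" "maps_line B z y"
    using maps_line_mult_split assms(2,5) by blast
  have B: "invertible B \<and> pact B C \<subseteq> C"
    using assms(1) semigrp_blocks_subset semigrp.base scaled_semigrp_preserves by blast
  have "z \<in> C" using z(1) assms(3,4) by (auto simp: pact_maps_line)
  moreover have "z \<notin> interior C"
  proof
    assume "z \<in> interior C"
    then have "y \<in> pact B (interior C)" using z(2) by (auto simp: pact_maps_line)
    then have "y \<in> interior C" using pact_interior_subset B by blast
    then show False using assms(6) frontier_C by blast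
  qed
  ultimately show ?thesis using that z frontier_C by blast
qed

definition reached_from :: "real \<Rightarrow> real \<Rightarrow> bool" where
  "reached_from u v \<longleftrightarrow> (\<exists>W\<in>semigrp blocks. maps_line W v u)"

lemma frontier_chain:
  assumes "length As = length Fs" "set As \<subseteq> AA - conformal_part AA" "set Fs \<subseteq> Fset AA"
    and "x \<in> C" "maps_line (alt_prod As Fs) x y" "y \<in> frontier C"
  shows "\<exists>ps. length ps = Suc (length As) \<and> hd ps = angle_rep y
    \<and> set ps \<subseteq> frontier C \<inter> {0..<pi} \<and> sorted_wrt reached_from ps"
  using assms
proof (induction As arbitrary: Fs y)
  case Nil
  then show ?case using angle_rep_frontier by (intro exI[of _ "[angle_rep y]"]) simp
next
  case (Cons A As)
  then obtain F Fs' where Fs: "Fs = F # Fs'" by (cases Fs) auto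
  have prems: "length As = length Fs'" "set As \<subseteq> AA - conformal_part AA" "set Fs' \<subseteq> Fset AA"
    and AF: "A ** F \<in> blocks"
    using Cons.prems by (auto simp: Fs blocks_def)
  have rest: "invertible (alt_prod As Fs') \<and> pact (alt_prod As Fs') C \<subseteq> C"
    using alt_prod_preserves prems by blast
  have "maps_line (A ** F ** alt_prod As Fs') x y"
    using Cons.prems(5) by (simp add: Fs alt_prod_Cons)
  then obtain z where z: "z \<in> frontier C" "maps_line (alt_prod As Fs') x z" "maps_line (A ** F) z y"
    using frontier_preimage[OF AF _ _ Cons.prems(4) _ Cons.prems(6)] rest by blast
  obtain ps where ps: "length ps = Suc (length As)" "hd ps = angle_rep z"
    "set ps \<subseteq> frontier C \<inter> {0..<pi}" "sorted_wrt reached_from ps"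
    using Cons.IH[OF prems Cons.prems(4) z(2,1)] by blast
  then obtain ps' where ps': "ps = angle_rep z # ps'" by (cases ps) auto
  have step: "maps_line (A ** F) (angle_rep z) (angle_rep y)" using z(3) by simp
  have "reached_from (angle_rep y) p" if "p \<in> set ps" for p
  proof (cases "p = angle_rep z")
    case True
    then show ?thesis using step semigrp.base[OF AF] unfolding reached_from_def by blast
  next
    case False
    then have "reached_from (angle_rep z) p" using that ps(4) ps' by auto
    then obtain W where "W \<in> semigrp blocks" "maps_line W p (angle_rep z)"
      by (auto simp: reached_from_def)
    then show ?thesis
      using maps_line_mult[OF _ step] semigrp.mult[OF semigrp.base[OF AF]]
      unfolding reached_from_def by blast
  qed
  then show ?case
    using ps angle_rep_frontier[OF Cons.prems(6)] by (intro exI[of _ "angle_rep y # ps"]) auto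
qed

lemma alt_prod_into_interior:
  assumes "nbdry C \<le> length As" "length As = length Fs"
    and "set As \<subseteq> AA - conformal_part AA" "set Fs \<subseteq> Fset AA"
  shows "pact (alt_prod As Fs) C \<subseteq> interior C"
proof
  fix y assume "y \<in> pact (alt_prod As Fs) C"
  then obtain x where x: "x \<in> C" "maps_line (alt_prod As Fs) x y" by (auto simp: pact_maps_line)
  have "y \<in> C"
    using x alt_prod_preserves[OF assms(2) _ assms(4)] assms(3) by (auto simp: pact_maps_line)
  show "y \<in> interior C"
  proof (rule ccontr)
    assume "y \<notin> interior C"
    then have "y \<in> frontier C" using \<open>y \<in> C\<close> frontier_C by blast
    then obtain ps where ps: "length ps = Suc (length As)"
      "set ps \<subseteq> frontier C \<inter> {0..<pi}" "sorted_wrt reached_from ps"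
      using frontier_chain[OF assms(2-4) x] by blast
    have "distinct ps"
      using sorted_wrt_irrefl_imp_distinct[OF ps(3)] ps(2) semigrp_blocks_no_fixed_frontier_line
      unfolding reached_from_def by blast
    then have "Suc (length As) \<le> nbdry C"
      using card_mono[OF finite_frontier_C ps(2)] ps(1) by (simp add: nbdry_def distinct_card)
    then show False using assms(1) by simp
  qed
qed

end

theorem lemma3p8:
  fixes AA :: "(real^2^2) set" and C :: "real set"
  assumes "\<forall>A\<in>AA. invertible A"
    and "invariant AA C"
    and "unstable_multicone AA C"
    and "\<forall>M\<in>semigrp AA. \<not> parabolic M"
  shows "\<forall>n As Fs. n \<ge> (nbdry C)^2 + 1 \<longrightarrow> length As = n \<longrightarrow> length Fs = n
           \<longrightarrow> set As \<subseteq> AA - conformal_part AA \<longrightarrow> set Fs \<subseteq> Fset AA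
           \<longrightarrow> pact (alt_prod As Fs) C \<subseteq> interior C"
proof (intro allI impI)
  interpret invariant_unstable_multicone AA C using assms by unfold_locales
  fix n As Fs
  assume "n \<ge> (nbdry C)^2 + 1" "length As = n" "length Fs = n"
    "set As \<subseteq> AA - conformal_part AA" "set Fs \<subseteq> Fset AA"
  moreover have "nbdry C \<le> (nbdry C)^2 + 1" by (simp add: power2_eq_square le_SucI le_square)
  ultimately show "pact (alt_prod As Fs) C \<subseteq> interior C"
    using alt_prod_into_interior by simp
qed

end
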